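(* Let $(\vartheta,\mathbb{P})$ be an arbitrary mutation law over $\mathcal{A}=\{a_0,\dots,a_{d-1}\}$, let $k\in\mathbb{N}$, and let $w$ be a word with $|w|\ge k$. Then \[\mathbb{E}\big[\mathbf{ct}^{(k)}_{\vartheta(w)}\big]=\frac{1}{|w|}\Big(\mathbf{M}^{(k)}+(|w|-k)\mathbf{I}\Big)\cdot\mathbf{ct}^{(k)}_w,\] where $\vartheta(w)$ is the result of a single mutation step applied to $w$.
   Context: Let $\mathcal{A}=\{a_0,\dots,a_{d-1}\}$ be a finite alphabet and $\mathcal{A}^\star$ the set of finite nonempty words. A mutation law assigns to each $a_t$ a finitely supported probability distribution $\mathbb{P}_{a_t}$ on $\mathcal{A}^\star$; $\vartheta(a_t)$ denotes a random word with law $\mathbb{P}_{a_t}$. A mutation step applied to $w=w_0\cdots w_{m-1}$ chooses $i\in\{0,\dots,m-1\}$ uniformly at random and replaces $w_i$ by an independent random word with law $\mathbb{P}_{w_i}$, giving $\vartheta(w)$. For words $u,v$ with $|u|\le|v|$, $\mathrm{ct}_v(u)$ is the number of $i\in\{0,\dots,|v|-1\}$ with $v_i\cdots v_{i+|u|-1}=u$, indices cyclic modulo $|v|$; $\mathbf{ct}^{(k)}_v=(\mathrm{ct}_v(u))_{u\in\mathcal{A}^k}\in\mathbb{R}^{d^k}$. The $k$-substitution matrix $\mathbf{M}^{(k)}$ is the $d^k\times d^k$ matrix indexed by $\mathcal{A}^k$ with, for $u,v\in\mathcal{A}^k$, $v=v_0\cdots v_{k-1}$, \[\mathbf{M}^{(k)}_{u,v}=\sum_{l\ge1}\sum_{\eta\in\mathcal{A}^l}\sum_{t\in[d]}\Pr(\vartheta(a_t)=\eta)\Big(\sum_{j=1}^{k-1}\mathbb{1}[v_j=a_t]\,\mathbb{1}\big[(v_0\cdots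 v_{j-1}\,\eta\,v_{j+1}\cdots v_{k-1})_{[k]}=u\big]+\sum_{j=0}^{l-1}\mathbb{1}[v_0=a_t]\,\mathbb{1}\big[(\eta\,v_1\cdots v_{k-1})_{j+[k]}=u\big]\Big),\] where for a word $x$, $x_{j+[k]}=x_jx_{j+1}\cdots x_{j+k-1}$ and $x_{[k]}$ is its first $k$ symbols. *)

theory Defs
  imports "HOL-Probability.Probability"
begin

definition mutation_law :: "('a \<Rightarrow> 'a list pmf) \<Rightarrow> bool" where
  "mutation_law P \<longleftrightarrow> (\<forall>a. finite (set_pmf (P a)) \<and> [] \<notin> set_pmf (P a))"

definition mutate :: "('a \<Rightarrow> 'a list pmf) \<Rightarrow> 'a list \<Rightarrow> 'a list pmf" where
  "mutate P w =
     do { i \<leftarrow> pmf_of_set {0..<length w};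
          \<eta> \<leftarrow> P (w ! i);
          return_pmf (take i w @ \<eta> @ drop (Suc i) w) }"

definition ct :: "'a list \<Rightarrow> 'a list \<Rightarrow> nat" where
  "ct v u = card {i. i < length v \<and> (\<forall>m < length u. v ! ((i + m) mod length v) = u ! m)}"

definition words :: "nat \<Rightarrow> 'a list set" where
  "words k = {v. length v = k}"

text \<open>The k-substitution matrix M^(k), entry (u,v). Summing over all words \<eta>
weighted by their probability equals summing over the (finite) support.\<close>
definition subst_matrix :: "('a::finite \<Rightarrow> 'a list pmf) \<Rightarrow> nat \<Rightarrow> 'a list \<Rightarrow> 'a list \<Rightarrow> real" where
  "subst_matrix P k u v =
     (\<Sum>t\<in>UNIV. \<Sum>\<eta>\<in>set_pmf (P t). pmf (P t) \<eta> *
        ( (\<Sum>j\<in>{1..k-1}. (if v ! j = t \<and> take k (take j v @ \<eta> @ drop (Suc j) v) = u then 1 else 0))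
        + (\<Sum>j\<in>{0..<length \<eta>}. (if v ! 0 = t \<and> take k (drop j (\<eta> @ drop 1 v)) = u then 1 else 0))))"

end

theory Submission imports Defs begin

text \<open>Counting cyclically, a word of length \<open>n \<ge> k\<close> has exactly \<open>n\<close> windows of length \<open>k\<close>,
  and occurrence counts are invariant under rotation. Mutating position \<open>i\<close> leaves the \<open>n - k\<close>
  windows avoiding \<open>i\<close> unchanged, while the window meeting \<open>i\<close> at offset \<open>j\<close> is replaced by
  exactly the windows that the definition of the substitution matrix attributes to the pair (window, \<open>j\<close>): one
  window for \<open>j \<ge> 1\<close>, and \<open>|\<eta>|\<close> windows for \<open>j = 0\<close>. Averaging over \<open>\<eta>\<close> and over the
  uniform position \<open>i\<close>, every window of \<open>w\<close> is met at every offset exactly once.\<close>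

text \<open>The cyclic window of length \<open>k\<close> starting at \<open>s\<close>; meaningful for \<open>s < |v|\<close> and \<open>k \<le> |v|\<close>.\<close>
definition window :: "nat \<Rightarrow> 'a list \<Rightarrow> nat \<Rightarrow> 'a list" where
  "window k v s = take k (drop s (v @ v))"

lemma length_window: "s < length v \<Longrightarrow> k \<le> length v \<Longrightarrow> length (window k v s) = k"
  by (simp add: window_def)

lemma nth_window:
  assumes "s < length v" "k \<le> length v" "q < k"
  shows "window k v s ! q = v ! ((s + q) mod length v)"
proof -
  have "window k v s ! q = (v @ v) ! (s + q)"
    using assms by (simp add: window_def nth_take nth_drop del: drop_append take_append)
  also have "\<dots> = v ! ((s + q) mod length v)"
  proof (cases "s + q < length v")
    case False
    then have "(s + q) mod length v = s + q - length v"
      using assms by (simp add: le_mod_geq)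
    with False show ?thesis by (simp add: nth_append)
  qed (simp add: nth_append)
  finally show ?thesis .
qed

lemma ct_eq_card_windows:
  assumes "length u \<le> length v"
  shows "ct v u = card {i. i < length v \<and> window (length u) v i = u}"
  unfolding ct_def using assms
  by (intro arg_cong[where f = card] Collect_cong)
     (auto simp: list_eq_iff_nth_eq length_window nth_window)

lemma ct_eq_sum_windows:
  assumes "length u \<le> length v"
  shows "real (ct v u) = (\<Sum>i<length v. of_bool (window (length u) v i = u))"
proof -
  have "{i. i < length v \<and> window (length u) v i = u} = {..<length v} \<inter> {i. window (length u) v i = u}"
    by auto
  then show ?thesis
    by (simp add: ct_eq_card_windows[OF assms])
qed

lemma window_rotate:
  assumes "s < length v" "k \<le> length v"
  shows "window k (rotate r v) s = window k v ((s + r) mod length v)"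
proof (rule nth_equalityI)
  have "0 < length v"
    using assms by linarith
  then have s': "(s + r) mod length v < length v"
    by simp
  show "length (window k (rotate r v) s) = length (window k v ((s + r) mod length v))"
    using assms s' by (simp add: length_window)
  fix q assume "q < length (window k (rotate r v) s)"
  then have q: "q < k"
    using assms by (simp add: length_window)
  have "window k (rotate r v) s ! q = v ! ((r + (s + q) mod length v) mod length v)"
    using assms q \<open>0 < length v\<close> by (simp add: nth_window nth_rotate)
  also have "(r + (s + q) mod length v) mod length v = ((s + r) mod length v + q) mod length v"
    by (simp add: mod_add_right_eq mod_add_left_eq ac_simps)
  also have "v ! \<dots> = window k v ((s + r) mod length v) ! q"
    using assms q s' by (simp add: nth_window)
  finally show "window k (rotate r v) s ! q = window k v ((s + r) mod length v) ! q" .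
qed

lemma inj_mod_shift: "inj_on (\<lambda>i. (i + c) mod n) {..<(n::nat)}"
proof (rule linorder_inj_onI')
  fix i j assume ij: "i \<in> {..<n}" "j \<in> {..<n}" "i < j"
  show "(i + c) mod n \<noteq> (j + c) mod n"
  proof
    assume "(i + c) mod n = (j + c) mod n"
    then have "n dvd j - i"
      using mod_eq_dvd_iff_nat[of "i + c" "j + c" n] ij by simp
    moreover have "0 < j - i" "j - i < n"
      using ij by auto
    ultimately show False
      by (simp add: nat_dvd_not_less)
  qed
qed

lemma sum_mod_shift: "(\<Sum>i<n. g ((i + c) mod n)) = (\<Sum>i<(n::nat). g i)"
proof (cases "n = 0")
  case False
  then have "(\<lambda>i. (i + c) mod n) ` {..<n} = {..<n}"
    by (intro endo_inj_surj) (auto simp: inj_mod_shift)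
  then show ?thesis
    using sum.reindex[OF inj_mod_shift, of g c n] by simp
qed simp

lemma ct_rotate:
  assumes "length u \<le> length v"
  shows "ct (rotate r v) u = ct v u"
proof -
  have "real (ct (rotate r v) u) = (\<Sum>i<length v. of_bool (window (length u) (rotate r v) i = u))"
    using assms ct_eq_sum_windows[of u "rotate r v"] by simp
  also have "\<dots> = (\<Sum>i<length v. of_bool (window (length u) v ((i + r) mod length v) = u))"
    using assms by (intro sum.cong) (simp_all add: window_rotate)
  also have "\<dots> = (\<Sum>i<length v. of_bool (window (length u) v i = u))"
    by (rule sum_mod_shift)
  also have "\<dots> = real (ct v u)"
    by (simp only: ct_eq_sum_windows[OF assms])
  finally show ?thesis
    by simp
qed

text \<open>The summand of \<open>subst_matrix\<close> for the window \<open>v\<close> whose letter at position \<open>j\<close>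
  is replaced by \<open>\<eta>\<close>: for \<open>j \<ge> 1\<close> the single new window starting where \<open>v\<close> started,
  for \<open>j = 0\<close> the \<open>|\<eta>|\<close> new windows starting inside \<open>\<eta>\<close>.\<close>
definition subst_hits :: "nat \<Rightarrow> 'a list \<Rightarrow> nat \<Rightarrow> 'a list \<Rightarrow> 'a list \<Rightarrow> real" where
  "subst_hits k u j v \<eta> =
     (if j = 0 then (\<Sum>j'\<in>{0..<length \<eta>}. if take k (drop j' (\<eta> @ drop 1 v)) = u then 1 else 0)
      else if take k (take j v @ \<eta> @ drop (Suc j) v) = u then 1 else 0)"

definition expected_hits :: "('a \<Rightarrow> 'a list pmf) \<Rightarrow> nat \<Rightarrow> 'a list \<Rightarrow> nat \<Rightarrow> 'a list \<Rightarrow> real" where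
  "expected_hits P k u j v = (\<Sum>\<eta>\<in>set_pmf (P (v ! j)). pmf (P (v ! j)) \<eta> * subst_hits k u j v \<eta>)"

lemma subst_matrix_eq_sum_expected_hits:
  assumes "1 \<le> k"
  shows "subst_matrix P k u v = (\<Sum>j<k. expected_hits P k u j v)"
proof -
  have "{..<k} = insert 0 {1..<k}" and "{1..k-1} = {1..<k}"
    using assms by auto
  then have split_j: "(\<Sum>j\<in>{1..k-1}. if v ! j = t \<and> take k (take j v @ \<eta> @ drop (Suc j) v) = u then 1 else 0)
        + (\<Sum>j\<in>{0..<length \<eta>}. if v ! 0 = t \<and> take k (drop j (\<eta> @ drop 1 v)) = u then 1 else 0)
     = (\<Sum>j<k. if v ! j = t then subst_hits k u j v \<eta> else (0::real))" for t \<eta>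
    by (auto simp: subst_hits_def intro!: sum.cong)
  have per_letter: "(\<Sum>\<eta>\<in>set_pmf (P t). pmf (P t) \<eta> * (\<Sum>j<k. if v ! j = t then subst_hits k u j v \<eta> else 0))
      = (\<Sum>j<k. if v ! j = t then expected_hits P k u j v else 0)" for t
    unfolding expected_hits_def sum_distrib_left by (subst sum.swap) (auto intro!: sum.cong)
  have "subst_matrix P k u v = (\<Sum>t\<in>UNIV. \<Sum>j<k. if v ! j = t then expected_hits P k u j v else 0)"
    unfolding subst_matrix_def split_j per_letter ..
  also have "\<dots> = (\<Sum>j<k. expected_hits P k u j v)"
    by (subst sum.swap) simp
  finally show ?thesis .
qed

lemma window_append_prefix:
  assumes "p + k \<le> length w0"
  shows "window k (w0 @ \<eta>) p = window k (w0 @ [a]) p"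
  using assms by (simp add: window_def)

lemma window_append_straddle:
  assumes "1 \<le> j" "j < k" "k \<le> Suc (length w0)" "\<eta> \<noteq> []"
  shows "window k (w0 @ \<eta>) (length w0 - j)
    = take k (take j (window k (w0 @ [a]) (length w0 - j)) @ \<eta> @ drop (Suc j) (window k (w0 @ [a]) (length w0 - j)))"
proof -
  have "k - (j + length \<eta>) \<le> k - Suc j"
    using assms by (simp add: Suc_le_eq diff_le_mono2)
  then show ?thesis
    using assms by (simp add: window_def min_def drop_take)
qed

lemma window_append_suffix:
  assumes "j < length \<eta>" "1 \<le> k" "k \<le> Suc (length w0)"
  shows "window k (w0 @ \<eta>) (length w0 + j) = take k (drop j (\<eta> @ drop 1 (window k (w0 @ [a]) (length w0))))"
  using assms by (simp add: window_def min_def drop_take)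

text \<open>The windows of \<open>w0 @ \<eta>\<close> fall into three classes: those inside \<open>w0\<close>, those
  straddling the boundary, and those starting inside \<open>\<eta>\<close>; compared with \<open>w0 @ [a]\<close>, the last
  two classes are what replacing the final letter \<open>a\<close> by \<open>\<eta>\<close> produces.\<close>
lemma ct_append_eq_windows:
  assumes \<eta>: "\<eta> \<noteq> []" and k: "1 \<le> k" "k \<le> Suc (length w0)" and u: "length u = k"
  shows "real (ct (w0 @ \<eta>) u) = (\<Sum>s<Suc (length w0) - k. of_bool (window k (w0 @ [a]) s = u))
           + (\<Sum>j<k. subst_hits k u j (window k (w0 @ [a]) (length w0 - j)) \<eta>)"
proof -
  define m where "m = length w0"
  define W where "W = w0 @ [a]"
  define f where "f p = (of_bool (window k (w0 @ \<eta>) p = u) :: real)" for p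
  have "length u \<le> length (w0 @ \<eta>)"
    using \<eta> k u by (cases \<eta>) auto
  then have "real (ct (w0 @ \<eta>) u) = (\<Sum>p<m + length \<eta>. f p)"
    using u by (simp only: ct_eq_sum_windows f_def m_def length_append)
  also have "\<dots> = (\<Sum>p\<in>{0..<Suc m - k}. f p) + (\<Sum>p\<in>{Suc m - k..<m}. f p) + (\<Sum>p\<in>{m..<m + length \<eta>}. f p)"
    using k \<eta> unfolding m_def
    by (simp add: sum.atLeastLessThan_concat atLeast0LessThan[symmetric])
  also have "(\<Sum>p\<in>{0..<Suc m - k}. f p) = (\<Sum>s<Suc m - k. of_bool (window k W s = u))"
    unfolding atLeast0LessThan
  proof (intro sum.cong refl)
    fix p assume "p \<in> {..<Suc m - k}"
    then have "p + k \<le> length w0"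
      using k by (auto simp: m_def)
    then show "f p = of_bool (window k W p = u)"
      by (simp add: f_def W_def window_append_prefix[of p k w0 \<eta> a])
  qed
  also have "(\<Sum>p\<in>{Suc m - k..<m}. f p) = (\<Sum>j\<in>{1..<k}. subst_hits k u j (window k W (m - j)) \<eta>)"
  proof (rule sum.reindex_bij_witness[of _ "\<lambda>j. m - j" "\<lambda>p. m - p"])
    fix p assume "p \<in> {Suc m - k..<m}"
    then have j: "1 \<le> m - p" "m - p < k" and "p < m"
      using k by auto
    then show "subst_hits k u (m - p) (window k W (m - (m - p))) \<eta> = f p"
      using window_append_straddle[of "m - p" k w0 \<eta> a] k \<eta>
      by (simp add: f_def subst_hits_def m_def W_def)
  qed (use k in \<open>auto simp: m_def\<close>)
  also have "(\<Sum>p\<in>{m..<m + length \<eta>}. f p) = (\<Sum>j\<in>{0..<length \<eta>}. f (j + m))"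
    using sum.shift_bounds_nat_ivl[of f 0 m "length \<eta>"] by (simp add: add.commute)
  also have "\<dots> = subst_hits k u 0 (window k W m) \<eta>"
    unfolding subst_hits_def if_P[OF refl]
  proof (intro sum.cong refl)
    fix j assume "j \<in> {0..<length \<eta>}"
    then show "f (j + m) = (if take k (drop j (\<eta> @ drop 1 (window k W m))) = u then 1 else 0)"
      using window_append_suffix[of j \<eta> k w0 a] k by (simp add: f_def W_def m_def add.commute)
  qed
  moreover have "(\<Sum>j<k. subst_hits k u j (window k W (m - j)) \<eta>)
      = subst_hits k u 0 (window k W m) \<eta> + (\<Sum>j\<in>{1..<k}. subst_hits k u j (window k W (m - j)) \<eta>)"
    using k by (simp add: lessThan_atLeast0 sum.atLeast_Suc_lessThan)
  ultimately show ?thesis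
    by (simp add: m_def W_def add.assoc)
qed

lemma ct_replace_letter:
  assumes i: "i < length w" and \<eta>: "\<eta> \<noteq> []" and k: "1 \<le> k" "k \<le> length w" and u: "length u = k"
  shows "real (ct (take i w @ \<eta> @ drop (Suc i) w) u) =
     (\<Sum>s<length w - k. of_bool (window k w ((s + Suc i) mod length w) = u))
     + (\<Sum>j<k. subst_hits k u j (window k w ((i + length w - j) mod length w)) \<eta>)"
proof -
  \<comment> \<open>Rotate so that the mutated letter comes last.\<close>
  define w0 where "w0 = drop (Suc i) w @ take i w"
  have length_w0: "length w0 = length w - 1"
    using i by (simp add: w0_def)
  have "rotate (Suc i) w = rotate (length (take (Suc i) w)) (take (Suc i) w @ drop (Suc i) w)"
    using i by simp
  then have rotate_w: "rotate (Suc i) w = w0 @ [w ! i]"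
    using i by (simp only: rotate_append) (simp add: w0_def take_Suc_conv_app_nth)
  have window_w0: "window k (w0 @ [w ! i]) s = window k w ((s + Suc i) mod length w)" if "s < length w" for s
    using window_rotate[OF that k(2), of "Suc i"] rotate_w by simp
  have "length u \<le> length (take i w @ \<eta> @ drop (Suc i) w)"
    using i \<eta> k u by (cases \<eta>) auto
  then have "ct (take i w @ \<eta> @ drop (Suc i) w) u = ct (w0 @ \<eta>) u"
    using ct_rotate[of u "take i w @ \<eta> @ drop (Suc i) w" "length (take i w @ \<eta>)"]
      rotate_append[of "take i w @ \<eta>" "drop (Suc i) w"]
    by (simp add: w0_def)
  then have "real (ct (take i w @ \<eta> @ drop (Suc i) w) u) =
     (\<Sum>s<Suc (length w0) - k. of_bool (window k (w0 @ [w ! i]) s = u))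
     + (\<Sum>j<k. subst_hits k u j (window k (w0 @ [w ! i]) (length w0 - j)) \<eta>)"
    using ct_append_eq_windows[OF \<eta> k(1), of w0 u "w ! i"] k u length_w0 i by simp
  also have "(\<Sum>s<Suc (length w0) - k. of_bool (window k (w0 @ [w ! i]) s = u) :: real) =
     (\<Sum>s<length w - k. of_bool (window k w ((s + Suc i) mod length w) = u))"
    using i length_w0 by (intro sum.cong) (simp_all add: window_w0)
  also have "(\<Sum>j<k. subst_hits k u j (window k (w0 @ [w ! i]) (length w0 - j)) \<eta>) =
      (\<Sum>j<k. subst_hits k u j (window k w ((i + length w - j) mod length w)) \<eta>)"
  proof (intro sum.cong refl)
    fix j assume "j \<in> {..<k}"
    then have "length w0 - j + Suc i = i + length w - j" and "length w0 - j < length w"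
      using length_w0 k i by auto
    then show "subst_hits k u j (window k (w0 @ [w ! i]) (length w0 - j)) \<eta>
        = subst_hits k u j (window k w ((i + length w - j) mod length w)) \<eta>"
      by (simp add: window_w0)
  qed
  finally show ?thesis .
qed

lemma nth_window_offset:
  assumes "j < k" "i < length w" "k \<le> length w"
  shows "window k w ((i + length w - j) mod length w) ! j = w ! i"
proof -
  have "0 < length w"
    using assms by linarith
  then have "window k w ((i + length w - j) mod length w) ! j = w ! (((i + length w - j) mod length w + j) mod length w)"
    using assms by (intro nth_window) auto
  also have "((i + length w - j) mod length w + j) mod length w = i"
    using assms by (simp add: mod_add_left_eq)
  finally show ?thesis .
qed

lemma expectation_mutate:
  assumes P: "mutation_law P" and w: "w \<noteq> []"
  shows "measure_pmf.expectation (mutate P w) f =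
    (\<Sum>i<length w. \<Sum>\<eta>\<in>set_pmf (P (w ! i)). pmf (P (w ! i)) \<eta> * f (take i w @ \<eta> @ drop (Suc i) w)) / real (length w)"
proof -
  have fin: "finite (set_pmf (P a))" for a
    using P by (simp add: mutation_law_def)
  have "measure_pmf.expectation (mutate P w) f =
     (\<Sum>i\<in>{0..<length w}. measure_pmf.expectation (P (w ! i) \<bind> (\<lambda>\<eta>. return_pmf (take i w @ \<eta> @ drop (Suc i) w))) f
        /\<^sub>R real (card {0..<length w}))"
    unfolding mutate_def
    by (rule pmf_expectation_bind_pmf_of_set) (use w fin in \<open>auto simp: set_bind_pmf\<close>)
  also have "\<dots> = (\<Sum>i<length w. (\<Sum>\<eta>\<in>set_pmf (P (w ! i)). pmf (P (w ! i)) \<eta> * f (take i w @ \<eta> @ drop (Suc i) w)) / real (length w))"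
    by (simp add: atLeast0LessThan pmf_expectation_bind[OF fin _ order_refl] divide_inverse_commute)
  finally show ?thesis
    by (simp add: sum_divide_distrib)
qed

lemma expected_ct_replace_letter:
  assumes P: "mutation_law P" and i: "i < length w" and k: "1 \<le> k" "k \<le> length w" and u: "length u = k"
  shows "(\<Sum>\<eta>\<in>set_pmf (P (w ! i)). pmf (P (w ! i)) \<eta> * real (ct (take i w @ \<eta> @ drop (Suc i) w) u))
      = (\<Sum>s<length w - k. of_bool (window k w ((s + Suc i) mod length w) = u))
        + (\<Sum>j<k. expected_hits P k u j (window k w ((i + length w - j) mod length w)))"
    (is "_ = ?avoiding + (\<Sum>j<k. expected_hits P k u j (?window j))")
proof -
  let ?p = "pmf (P (w ! i))"
  have fin: "finite (set_pmf (P (w ! i)))" and nonempty: "\<eta> \<in> set_pmf (P (w ! i)) \<Longrightarrow> \<eta> \<noteq> []" for \<eta>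
    using P by (auto simp: mutation_law_def)
  have "(\<Sum>\<eta>\<in>set_pmf (P (w ! i)). ?p \<eta> * real (ct (take i w @ \<eta> @ drop (Suc i) w) u))
      = (\<Sum>\<eta>\<in>set_pmf (P (w ! i)). ?p \<eta> * ?avoiding + (\<Sum>j<k. ?p \<eta> * subst_hits k u j (?window j) \<eta>))"
    using ct_replace_letter[OF i _ k u] nonempty
    by (intro sum.cong refl) (simp add: distrib_left sum_distrib_left)
  also have "\<dots> = (\<Sum>\<eta>\<in>set_pmf (P (w ! i)). ?p \<eta>) * ?avoiding
      + (\<Sum>j<k. \<Sum>\<eta>\<in>set_pmf (P (w ! i)). ?p \<eta> * subst_hits k u j (?window j) \<eta>)"
    by (simp add: sum.distrib sum_distrib_right sum.swap[of _ "set_pmf _"])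
  also have "(\<Sum>\<eta>\<in>set_pmf (P (w ! i)). ?p \<eta>) = 1"
    using fin by (simp add: sum_pmf_eq_1)
  also have "(\<Sum>j<k. \<Sum>\<eta>\<in>set_pmf (P (w ! i)). ?p \<eta> * subst_hits k u j (?window j) \<eta>)
      = (\<Sum>j<k. expected_hits P k u j (?window j))"
    using nth_window_offset[of _ k i w] i k by (simp add: expected_hits_def)
  finally show ?thesis
    by simp
qed

lemma expected_ct_mutate:
  assumes P: "mutation_law P" and k: "1 \<le> k" "k \<le> length w" and u: "length u = k"
  shows "measure_pmf.expectation (mutate P w) (\<lambda>x. real (ct x u)) =
    (\<Sum>s<length w. subst_matrix P k u (window k w s) + real (length w - k) * of_bool (window k w s = u))
      / real (length w)"
proof -
  define n where "n = length w"
  have avoiding: "(\<Sum>i<n. \<Sum>s<n - k. of_bool (window k w ((s + Suc i) mod n) = u))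
      = (\<Sum>s<n. real (n - k) * of_bool (window k w s = u))"
  proof -
    have "(\<Sum>i<n. \<Sum>s<n - k. of_bool (window k w ((s + Suc i) mod n) = u))
        = (\<Sum>s<n - k. \<Sum>i<n. of_bool (window k w ((i + Suc s) mod n) = u))"
      by (subst sum.swap) (simp add: add.commute)
    also have "\<dots> = (\<Sum>s<n - k. \<Sum>i<n. of_bool (window k w i = u))"
      by (rule sum.cong[OF refl]) (rule sum_mod_shift)
    also have "\<dots> = (\<Sum>s<n. real (n - k) * of_bool (window k w s = u))"
      by (simp only: sum_constant card_lessThan sum_distrib_left)
    finally show ?thesis .
  qed
  have through: "(\<Sum>i<n. \<Sum>j<k. expected_hits P k u j (window k w ((i + n - j) mod n)))
      = (\<Sum>s<n. subst_matrix P k u (window k w s))"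
  proof -
    have "(\<Sum>i<n. \<Sum>j<k. expected_hits P k u j (window k w ((i + n - j) mod n)))
        = (\<Sum>j<k. \<Sum>i<n. expected_hits P k u j (window k w ((i + (n - j)) mod n)))"
      using k by (subst sum.swap) (simp add: n_def)
    also have "\<dots> = (\<Sum>j<k. \<Sum>s<n. expected_hits P k u j (window k w s))"
      by (rule sum.cong[OF refl]) (rule sum_mod_shift)
    finally show ?thesis
      by (simp add: sum.swap[of _ "{..<k}"] subst_matrix_eq_sum_expected_hits[OF k(1)])
  qed
  have "w \<noteq> []"
    using k by auto
  have "measure_pmf.expectation (mutate P w) (\<lambda>x. real (ct x u))
      = (\<Sum>i<n. (\<Sum>s<n - k. of_bool (window k w ((s + Suc i) mod n) = u))
          + (\<Sum>j<k. expected_hits P k u j (window k w ((i + n - j) mod n)))) / real n"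
    unfolding expectation_mutate[OF P \<open>w \<noteq> []\<close>] n_def
    by (intro arg_cong[where f = "\<lambda>x. x / _"] sum.cong refl expected_ct_replace_letter[OF P _ k u]) simp
  also have "\<dots> = (\<Sum>s<n. subst_matrix P k u (window k w s) + real (n - k) * of_bool (window k w s = u)) / real n"
    unfolding sum.distrib avoiding through by (simp only: add.commute)
  finally show ?thesis
    by (simp only: n_def)
qed

lemma sum_words_ct:
  fixes w :: "'a::finite list"
  assumes "k \<le> length w"
  shows "(\<Sum>v\<in>words k. h v * real (ct w v)) = (\<Sum>s<length w. h (window k w s))"
proof -
  have finite: "finite (words k :: 'a list set)"
    using finite_lists_length_eq[of "UNIV :: 'a set" k] by (simp add: words_def)
  have windows: "window k w ` {..<length w} \<subseteq> words k"
    using assms by (auto simp: words_def length_window)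
  have "real (ct w v) = real (card {s \<in> {..<length w}. window k w s = v})" if "v \<in> words k" for v
    using that assms ct_eq_card_windows[of v w] by (simp add: words_def conj_commute)
  then have "(\<Sum>v\<in>words k. h v * real (ct w v)) = (\<Sum>v\<in>words k. \<Sum>s\<in>{s \<in> {..<length w}. window k w s = v}. h (window k w s))"
    by (intro sum.cong refl) simp
  also have "\<dots> = (\<Sum>s<length w. h (window k w s))"
    by (rule sum.group[OF finite_lessThan finite windows])
  finally show ?thesis .
qed

theorem mainTheorem5:
  fixes P :: "'a::finite \<Rightarrow> 'a list pmf" and k :: nat and w :: "'a list"
  assumes "mutation_law P"
    and "1 \<le> k"
    and "k \<le> length w"
  shows "\<forall>u \<in> words k.
           measure_pmf.expectation (mutate P w) (\<lambda>x. real (ct x u))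
           = (1 / real (length w)) *
             (\<Sum>v\<in>words k. (subst_matrix P k u v
                 + (real (length w) - real k) * (if u = v then 1 else 0)) * real (ct w v))"
proof
  fix u :: "'a list" assume "u \<in> words k"
  then have u: "length u = k"
    by (simp add: words_def)
  show "measure_pmf.expectation (mutate P w) (\<lambda>x. real (ct x u))
           = (1 / real (length w)) *
             (\<Sum>v\<in>words k. (subst_matrix P k u v
                 + (real (length w) - real k) * (if u = v then 1 else 0)) * real (ct w v))"
    unfolding expected_ct_mutate[OF assms u] sum_words_ct[OF assms(3)]
    using assms(3) by (simp add: of_nat_diff of_bool_def eq_commute[of u])
qed

end
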